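(* Let $q$ be a prime power, $n\ge1$ and $L\ge 2$ integers, and $r\in[0,\frac{L}{L+1})$ with $rn\in\mathbb{N}$, such that $n-\lceil\frac{L+1}{L}rn\rceil+1>(L-1)\frac{q}{q-1}$. Then no linear code $C\subseteq\mathbb{F}_q^n$ of dimension $n-\lceil\frac{L+1}{L}rn\rceil+1$ is $(r,L)$ list-decodable.
   Context: A linear $[n,k]_q$ code is a $k$-dimensional subspace of $\mathbb{F}_q^n$. $B_t(v)$ is the Hamming ball of radius $t$ around $v$ (Hamming distance = number of differing coordinates). A code $C\subseteq\mathbb{F}_q^n$ is $(r,L)$ list-decodable if $|B_{rn}(v)\cap C|\le L$ for every $v\in\mathbb{F}_q^n$. *)

theory Defs
  imports "HOL-Analysis.Analysis"
begin

text \<open>Vectors of F_q^n are modelled as elements of 'a ^ 'n with n = CARD('n),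
  where 'a is a finite field (so q = CARD('a) is automatically a prime power).\<close>

definition hamming_dist :: "'a ^ 'n \<Rightarrow> 'a ^ 'n \<Rightarrow> nat" where
  "hamming_dist x y = card {i. x $ i \<noteq> y $ i}"

definition hamming_ball :: "'a ^ 'n \<Rightarrow> real \<Rightarrow> ('a ^ 'n) set" where
  "hamming_ball v t = {y. real (hamming_dist v y) \<le> t}"

definition list_decodable :: "real \<Rightarrow> nat \<Rightarrow> ('a ^ 'n::finite) set \<Rightarrow> bool" where
  "list_decodable r L C \<longleftrightarrow>
     (\<forall>v. card (hamming_ball v (r * real CARD('n)) \<inter> C) \<le> L)"

end

theory Submission
  imports Defs
begin

text \<open>Take a minimal information set I of C (codewords vanishing on I vanish). By minimality there
  are codewords e p (p \<in> I) restricting to the unit vectors on I; they span C, so |I| \<ge> k.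
  Fix a coordinate j outside I. The (q - 1)|I| > (L - 1)q distinct multiples a e p (a \<noteq> 0)
  take at most q values at j, so L of them agree there. Split the remaining
  n - |I| - 1 \<le> n - k - 1 coordinates X into L + 1 disjoint blocks of size |X| div (L + 1), one
  for each of these L words and for 0, and let v copy every word on its block and take the
  common value at j. Then each of the L + 1 codewords differs from v in at most
  |X| - |X| div (L + 1) + 1 coordinates, and the choice of k makes this at most rn.\<close>

lemma mem_hamming_ball_of_nat: "y \<in> hamming_ball v (real m) \<longleftrightarrow> hamming_dist v y \<le> m"
  by (simp add: hamming_ball_def)

lemma hamming_dist_patch_le:
  fixes v w z :: "'a ^ 'n::finite"
  assumes "B \<subseteq> X" "\<And>x. x \<in> B \<Longrightarrow> v $ x = w $ x" "\<And>x. x \<notin> X \<Longrightarrow> v $ x = z $ x"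
    and "\<And>x. x \<notin> X \<Longrightarrow> x \<noteq> y \<Longrightarrow> w $ x = z $ x"
  shows "hamming_dist v w \<le> card X - card B + 1"
proof -
  have "{x. v $ x \<noteq> w $ x} \<subseteq> insert y (X - B)" using assms by force
  then have "hamming_dist v w \<le> card (insert y (X - B))"
    unfolding hamming_dist_def by (intro card_mono) auto
  also have "\<dots> \<le> card (X - B) + 1" by (simp add: card_insert_if)
  finally show ?thesis using assms(1) by (simp add: card_Diff_subset)
qed

lemma exists_center_close_to_all:
  fixes z :: "'a ^ 'n::finite"
  assumes "disjoint_family_on B A" "\<And>w. w \<in> A \<Longrightarrow> B w \<subseteq> X \<and> card (B w) = u"
    and "\<And>w. w \<in> A \<Longrightarrow> \<exists>y. \<forall>x. x \<notin> X \<longrightarrow> x \<noteq> y \<longrightarrow> w $ x = z $ x"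
  shows "\<exists>v. \<forall>w\<in>A. hamming_dist v w \<le> card X - u + 1"
proof -
  define v where "v = (\<chi> x. if \<exists>w\<in>A. x \<in> B w then (SOME w. w \<in> A \<and> x \<in> B w) $ x else z $ x)"
  have "hamming_dist v w \<le> card X - u + 1" if w: "w \<in> A" for w
  proof -
    have "v $ x = w $ x" if "x \<in> B w" for x
    proof -
      have "(SOME w. w \<in> A \<and> x \<in> B w) = w"
        using \<open>w \<in> A\<close> that assms(1) unfolding disjoint_family_on_def by (rule_tac some_equality) auto
      then show ?thesis using \<open>w \<in> A\<close> that unfolding v_def by auto
    qed
    moreover have "v $ x = z $ x" if "x \<notin> X" for x
      using assms(2) that unfolding v_def by auto
    moreover obtain y where "\<And>x. x \<notin> X \<Longrightarrow> x \<noteq> y \<Longrightarrow> w $ x = z $ x" using assms(3)[OF w] by blast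
    ultimately show ?thesis using hamming_dist_patch_le[of "B w" X v w z y] assms(2)[OF w] by auto
  qed
  then show ?thesis by blast
qed

lemma disjoint_blocks_exist:
  assumes "finite A" "finite X" "card A * u \<le> card X"
  obtains B where "disjoint_family_on B A" and "\<And>a. a \<in> A \<Longrightarrow> B a \<subseteq> X \<and> card (B a) = u"
proof -
  obtain g where g: "bij_betw g A {0..<card A}" using ex_bij_betw_finite_nat assms(1) by blast
  obtain h where h: "bij_betw h {0..<card X} X" using ex_bij_betw_nat_finite assms(2) by blast
  define seg where "seg a = {g a * u..<g a * u + u}" for a
  have seg_sub: "seg a \<subseteq> {0..<card X}" if "a \<in> A" for a
  proof -
    have "g a + 1 \<le> card A" using g that by (auto dest: bij_betw_apply)
    then have "g a * u + u \<le> card X" using assms(3) by (metis add_mult_distrib mult_1 order_trans mult_le_mono1)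
    then show ?thesis unfolding seg_def by auto
  qed
  have seg_disj: "seg a \<inter> seg b = {}" if "a \<in> A" "b \<in> A" "a \<noteq> b" for a b
  proof -
    have "g a \<noteq> g b" using g that by (auto simp: bij_betw_def inj_on_def)
    then have "g a * u + u \<le> g b * u \<or> g b * u + u \<le> g a * u"
      by (metis add_mult_distrib linorder_neqE_nat mult_1 mult_le_mono1 Suc_leI Suc_eq_plus1)
    then show ?thesis unfolding seg_def by auto
  qed
  have inj: "inj_on h {0..<card X}" using h by (rule bij_betw_imp_inj_on)
  show thesis
  proof
    show "disjoint_family_on (\<lambda>a. h ` seg a) A"
      unfolding disjoint_family_on_def
      using seg_disj seg_sub by (metis image_empty inj_on_image_Int[OF inj])
    show "h ` seg a \<subseteq> X \<and> card (h ` seg a) = u" if "a \<in> A" for a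
      using seg_sub[OF that] h inj
      by (auto simp: bij_betw_def card_image inj_on_subset seg_def)
  qed
qed

lemma information_vectors_span:
  fixes C :: "('a::field ^ 'n::finite) set"
  assumes "vec.subspace C"
    and determines: "\<And>c. c \<in> C \<Longrightarrow> (\<forall>i\<in>I. c $ i = 0) \<Longrightarrow> c = 0"
    and e_in: "\<And>p. p \<in> I \<Longrightarrow> e p \<in> C"
    and e_on_I: "\<And>p i. p \<in> I \<Longrightarrow> i \<in> I \<Longrightarrow> e p $ i = (if i = p then 1 else 0)"
  shows "C \<subseteq> vec.span (e ` I)"
proof
  fix c assume "c \<in> C"
  define d where "d = (\<Sum>p\<in>I. c $ p *s e p)"
  have "d \<in> C"
    unfolding d_def using assms(1) e_in by (intro vec.subspace_sum vec.subspace_scale) auto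
  have "d $ i = c $ i" if "i \<in> I" for i
  proof -
    have "d $ i = (\<Sum>p\<in>I. c $ p * e p $ i)" unfolding d_def by (simp add: sum_component)
    also have "\<dots> = (\<Sum>p\<in>I. if p = i then c $ i else 0)"
      using e_on_I that by (intro sum.cong) auto
    finally show ?thesis using that by simp
  qed
  then have "c = d"
    using determines[of "c - d"] \<open>c \<in> C\<close> \<open>d \<in> C\<close> assms(1) by (simp add: vec.subspace_diff)
  moreover have "d \<in> vec.span (e ` I)"
    unfolding d_def by (intro vec.span_sum vec.span_scale vec.span_base) auto
  ultimately show "c \<in> vec.span (e ` I)" by simp
qed

lemma subspace_information_set:
  fixes C :: "('a::field ^ 'n::finite) set"
  assumes "vec.subspace C"
  obtains I e where "vec.dim C \<le> card I"
    and "\<And>p. p \<in> I \<Longrightarrow> e p \<in> C"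
    and "\<And>p i. p \<in> I \<Longrightarrow> i \<in> I \<Longrightarrow> e p $ i = (if i = p then 1 else 0)"
proof -
  define determines where
    "determines I \<longleftrightarrow> (\<forall>c\<in>C. (\<forall>i\<in>I. c $ i = 0) \<longrightarrow> c = 0)" for I :: "'n set"
  have "determines UNIV" by (auto simp: determines_def vec_eq_iff)
  then obtain I where I: "determines I" and minimal: "\<And>I'. determines I' \<Longrightarrow> card I \<le> card I'"
    using ex_has_least_nat[of determines UNIV card] by blast
  have "\<exists>c\<in>C. c $ p = 1 \<and> (\<forall>i\<in>I - {p}. c $ i = 0)" if "p \<in> I" for p
  proof -
    have "card (I - {p}) < card I" using that by (intro card_Diff1_less) auto
    then have "\<not> determines (I - {p})" using minimal leD by blast
    then obtain c where c: "c \<in> C" "\<forall>i\<in>I - {p}. c $ i = 0" "c \<noteq> 0"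
      unfolding determines_def by blast
    then have "c $ p \<noteq> 0" using I that unfolding determines_def by (metis insert_Diff insert_iff)
    then have "(inverse (c $ p) *s c) $ p = 1 \<and> (\<forall>i\<in>I - {p}. (inverse (c $ p) *s c) $ i = 0)"
      using c(2) by simp
    moreover have "inverse (c $ p) *s c \<in> C" using assms c(1) by (rule vec.subspace_scale)
    ultimately show ?thesis by blast
  qed
  then obtain e where e_in: "\<And>p. p \<in> I \<Longrightarrow> e p \<in> C"
    and e_on_I: "\<And>p i. p \<in> I \<Longrightarrow> i \<in> I \<Longrightarrow> e p $ i = (if i = p then 1 else 0)"
    by (metis insert_Diff insert_iff)
  have "C \<subseteq> vec.span (e ` I)"
    using assms I e_in e_on_I unfolding determines_def by (intro information_vectors_span) auto
  then have "vec.dim C \<le> card (e ` I)" by (intro vec.dim_le_card) auto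
  also have "\<dots> \<le> card I" by (rule card_image_le) simp
  finally show thesis using that e_in e_on_I by blast
qed

lemma scaled_information_vectors_agreeing_at:
  fixes C :: "('a::{finite,field} ^ 'n::finite) set"
  assumes "vec.subspace C"
    and e_in: "\<And>p. p \<in> I \<Longrightarrow> e p \<in> C"
    and e_on_I: "\<And>p i. p \<in> I \<Longrightarrow> i \<in> I \<Longrightarrow> e p $ i = (if i = p then 1 else 0)"
    and many: "(L - 1) * CARD('a) < (CARD('a) - 1) * card I"
  obtains \<beta> W where "W \<subseteq> C" "card W = L" "0 \<notin> W"
    and "\<And>w. w \<in> W \<Longrightarrow> w $ j = \<beta> \<and> (\<exists>p\<in>I. \<forall>i\<in>I. i \<noteq> p \<longrightarrow> w $ i = 0)"
proof -
  define S :: "('a \<times> 'n) set" where "S = (UNIV - {0}) \<times> I"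
  define f where "f = (\<lambda>(a, p). a *s e p)"
  have f_at: "f (a, p) $ i = (if i = p then a else 0)" if "p \<in> I" "i \<in> I" for a p i
    using e_on_I that unfolding f_def by simp
  have "inj_on f S"
  proof (rule inj_onI, clarify)
    fix a p b p' assume "(a, p) \<in> S" "(b, p') \<in> S" and eq: "f (a, p) = f (b, p')"
    then have "p \<in> I" "p' \<in> I" "a \<noteq> 0" unfolding S_def by auto
    then have "f (b, p') $ p \<noteq> 0" using eq f_at[of p p a] by simp
    then have "p = p'" using f_at[of p' p b] \<open>p \<in> I\<close> \<open>p' \<in> I\<close> by (auto split: if_splits)
    then show "a = b \<and> p = p'" using eq f_at[of p p] \<open>p \<in> I\<close> by (metis (no_types))
  qed
  have "card S = (CARD('a) - 1) * card I" unfolding S_def by (simp add: card_cartesian_product card_Diff_subset)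
  then obtain \<beta> where "card ((\<lambda>x. f x $ j) -` {\<beta>} \<inter> S) * CARD('a) \<ge> card S"
    using pigeonhole_card[of "\<lambda>x. f x $ j" S UNIV] by auto
  then have "(L - 1) * CARD('a) < card ((\<lambda>x. f x $ j) -` {\<beta>} \<inter> S) * CARD('a)"
    using many \<open>card S = _\<close> by linarith
  then have "L \<le> card ((\<lambda>x. f x $ j) -` {\<beta>} \<inter> S)"
    by (simp only: mult_less_cancel2) linarith
  then obtain T where T: "T \<subseteq> (\<lambda>x. f x $ j) -` {\<beta>} \<inter> S" "card T = L"
    by (meson obtain_subset_with_card_n)
  have TS: "T \<subseteq> S" and T_at_j: "\<And>x. x \<in> T \<Longrightarrow> f x $ j = \<beta>" using T(1) by auto
  show thesis
  proof
    show "f ` T \<subseteq> C"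
      using TS assms(1) e_in unfolding S_def f_def by (auto intro!: vec.subspace_scale)
    show "card (f ` T) = L" using T(2) inj_on_subset[OF \<open>inj_on f S\<close> TS] by (simp add: card_image)
    show "0 \<notin> f ` T"
    proof
      assume "0 \<in> f ` T"
      then obtain a p where "(a, p) \<in> S" "f (a, p) = 0" using TS by auto
      then show False using f_at[of p p a] unfolding S_def by auto
    qed
    show "w $ j = \<beta> \<and> (\<exists>p\<in>I. \<forall>i\<in>I. i \<noteq> p \<longrightarrow> w $ i = 0)" if "w \<in> f ` T" for w
    proof -
      obtain a p where "(a, p) \<in> T" "w = f (a, p)" using \<open>w \<in> f ` T\<close> by auto
      moreover have "p \<in> I" using \<open>(a, p) \<in> T\<close> TS unfolding S_def by auto
      ultimately show ?thesis using T_at_j f_at by auto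
    qed
  qed
qed

lemma codewords_in_small_ball:
  fixes C :: "('a::{finite,field} ^ 'n::finite) set" and j :: 'n
  assumes "vec.subspace C"
    and e_in: "\<And>p. p \<in> I \<Longrightarrow> e p \<in> C"
    and e_on_I: "\<And>p i. p \<in> I \<Longrightarrow> i \<in> I \<Longrightarrow> e p $ i = (if i = p then 1 else 0)"
    and many: "(L - 1) * CARD('a) < (CARD('a) - 1) * card I"
  defines "X \<equiv> - I - {j}"
  shows "\<exists>v. L + 1 \<le> card (hamming_ball v (real (card X - card X div (L + 1) + 1)) \<inter> C)"
proof -
  obtain \<beta> W where W: "W \<subseteq> C" "card W = L" "0 \<notin> W"
    and W_pattern: "\<And>w. w \<in> W \<Longrightarrow> w $ j = \<beta> \<and> (\<exists>p\<in>I. \<forall>i\<in>I. i \<noteq> p \<longrightarrow> w $ i = 0)"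
    using scaled_information_vectors_agreeing_at[OF assms(1) e_in e_on_I many] by blast
  define A where "A = insert 0 W"
  have "card A = L + 1" using W(2,3) unfolding A_def by (simp add: card_insert_if)
  then obtain B where B: "disjoint_family_on B A"
    and B_sub: "\<And>w. w \<in> A \<Longrightarrow> B w \<subseteq> X \<and> card (B w) = card X div (L + 1)"
    using disjoint_blocks_exist[of A X "card X div (L + 1)"] unfolding A_def
    by (metis finite finite_insert div_times_less_eq_dividend mult.commute)
  define z :: "'a ^ 'n" where "z = (\<chi> x. if x = j then \<beta> else 0)"
  have "\<exists>y. \<forall>x. x \<notin> X \<longrightarrow> x \<noteq> y \<longrightarrow> w $ x = z $ x" if w: "w \<in> A" for w
  proof (cases "w = 0")
    case True
    then show ?thesis unfolding z_def by (intro exI[of _ j]) auto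
  next
    case False
    then obtain p where "p \<in> I" "\<forall>i\<in>I. i \<noteq> p \<longrightarrow> w $ i = 0" "w $ j = \<beta>"
      using w W_pattern unfolding A_def by blast
    then show ?thesis unfolding z_def X_def by (intro exI[of _ p]) auto
  qed
  then obtain v where "\<forall>w\<in>A. hamming_dist v w \<le> card X - card X div (L + 1) + 1"
    using exists_center_close_to_all[OF B B_sub] by blast
  then have "A \<subseteq> hamming_ball v (real (card X - card X div (L + 1) + 1)) \<inter> C"
    using W(1) vec.subspace_0[OF assms(1)] unfolding A_def by (auto simp only: mem_hamming_ball_of_nat)
  then show ?thesis using \<open>card A = L + 1\<close> by (metis card_mono finite)
qed

lemma sub_div_add_one_le:
  fixes L K d t :: nat
  assumes "L * d < (L + 1) * t" and "K \<le> d - 1"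
  shows "K - K div (L + 1) + 1 \<le> t"
proof -
  have "L * (K + 1) < (L + 1) * t"
  proof (cases "d = 0")
    case True
    then show ?thesis using assms by (cases t) auto
  next
    case False
    then have "K + 1 \<le> d" using assms(2) by linarith
    then have "L * (K + 1) \<le> L * d" by (rule mult_le_mono2)
    then show ?thesis using assms(1) by linarith
  qed
  define u where "u = K div (L + 1)"
  define w where "w = K mod (L + 1)"
  have K: "K = (L + 1) * u + w" unfolding u_def w_def by (metis div_mult_mod_eq mult.commute)
  have "w \<le> L" unfolding w_def using mod_less_divisor[of "L + 1" K] by linarith
  then have "(L + 1) * (L * u + w) \<le> L * (K + 1)" unfolding K by (simp add: algebra_simps)
  then have "L * u + w < t" using \<open>L * (K + 1) < (L + 1) * t\<close> by (metis le_less_trans mult_less_cancel1)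
  then show ?thesis unfolding u_def[symmetric] using K by simp
qed

lemma redundancy_bound_of_ceiling:
  fixes L n k t :: nat
  assumes "L > 0" "k \<le> n" "int k = int n - \<lceil>(real L + 1) / real L * real t\<rceil> + 1"
  shows "L * (n - k) < (L + 1) * t"
proof -
  have "real (n - k) < (real L + 1) / real L * real t"
    using assms(2,3) ceiling_correct[of "(real L + 1) / real L * real t"] by (simp add: of_nat_diff)
  then have "real L * real (n - k) < (real L + 1) * real t"
    using assms(1) by (simp add: field_simps)
  then show ?thesis by (metis of_nat_1 of_nat_add of_nat_less_iff of_nat_mult)
qed

lemma nat_mult_less_of_divide_less:
  fixes L q k m :: nat
  assumes "q \<ge> 2" "L \<ge> 1" "(real L - 1) * real q / (real q - 1) < real k" "k \<le> m"
  shows "(L - 1) * q < (q - 1) * m"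
proof -
  have "(real L - 1) * real q < real k * (real q - 1)"
    using assms(1,3) by (simp add: pos_divide_less_eq)
  also have "\<dots> \<le> real m * (real q - 1)" using assms(1,4) by (simp add: mult_right_mono)
  finally have "real ((L - 1) * q) < real ((q - 1) * m)"
    using assms(1,2) by (simp add: of_nat_diff mult.commute)
  then show ?thesis by (simp only: of_nat_less_iff)
qed

theorem lemma3p5:
  fixes C :: "(('a::{finite,field}) ^ 'n) set"
    and r :: real and L :: nat
  defines "n \<equiv> CARD('n)" and "q \<equiv> CARD('a)"
  assumes "L \<ge> 2"
    and "0 \<le> r" and "r < real L / (real L + 1)"
    and "\<exists>m::nat. r * real n = real m"
    and "real_of_int (int n - \<lceil>(real L + 1) / real L * r * real n\<rceil> + 1)
           > (real L - 1) * real q / (real q - 1)"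
    and "vec.subspace C"
    and "int (vec.dim C) = int n - \<lceil>(real L + 1) / real L * r * real n\<rceil> + 1"
  shows "\<not> list_decodable r L C"
proof
  assume decodable: "list_decodable r L C"
  obtain t :: nat where t: "r * real n = real t" using assms(6) by blast
  obtain I e where dim_le: "vec.dim C \<le> card I" and e_in: "\<And>p. p \<in> I \<Longrightarrow> e p \<in> C"
    and e_on_I: "\<And>p i. p \<in> I \<Longrightarrow> i \<in> I \<Longrightarrow> e p $ i = (if i = p then 1 else 0)"
    using subspace_information_set[OF assms(8)] by blast
  have "card I \<le> n" unfolding n_def by (simp add: card_mono)
  have dim_eq: "int (vec.dim C) = int n - \<lceil>(real L + 1) / real L * real t\<rceil> + 1"
    using assms(9) t by (simp add: mult.assoc)
  have "q \<ge> 2" unfolding q_def using card_mono[of UNIV "{0::'a, 1}"] by simp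
  moreover have "(real L - 1) * real q / (real q - 1) < real (vec.dim C)"
    using assms(7) by (simp only: assms(9)[symmetric] of_int_of_nat_eq)
  ultimately have many: "(L - 1) * q < (q - 1) * card I"
    using nat_mult_less_of_divide_less assms(3) dim_le by simp
  obtain j :: 'n where j: "- I \<noteq> {} \<Longrightarrow> j \<in> - I" by blast
  define X where "X = - I - {j}"
  have "card (- I) = n - card I" unfolding n_def by (simp add: Compl_eq_Diff_UNIV card_Diff_subset)
  then have "card X \<le> (n - vec.dim C) - 1"
    using j dim_le unfolding X_def by (cases "- I = {}") (auto simp: card_Diff_singleton_if)
  moreover have "L * (n - vec.dim C) < (L + 1) * t"
    using redundancy_bound_of_ceiling dim_eq dim_le \<open>card I \<le> n\<close> assms(3) by simp
  ultimately have radius: "card X - card X div (L + 1) + 1 \<le> t" by (rule sub_div_add_one_le[rotated])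
  obtain v where "L + 1 \<le> card (hamming_ball v (real (card X - card X div (L + 1) + 1)) \<inter> C)"
    using codewords_in_small_ball[OF assms(8) e_in e_on_I many[unfolded q_def]] unfolding X_def by blast
  also have "\<dots> \<le> card (hamming_ball v (r * real CARD('n)) \<inter> C)"
    using radius t unfolding hamming_ball_def n_def by (intro card_mono) auto
  finally show False using decodable unfolding list_decodable_def by (metis not_less_eq_eq Suc_eq_plus1)
qed

end
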